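(* Let $X$ be a Peano continuum and $f:X\to X$ a cw-expansive homeomorphism. Then the set $\mathcal S$ of sinks of $f$ is open in $X$, and every point of $\mathcal S\cap\Omega(f)$ is periodic.
   Context: A Peano continuum is a compact, connected, locally connected metric space $(X,d)$ with more than one point. A homeomorphism $f:X\to X$ of a compact metric space is continuum-wise expansive (cw-expansive) if there is $\alpha>0$ such that $\sup_{n\in\mathbb Z}\operatorname{diam} f^n(C)>\alpha$ for every continuum $C\subset X$ containing more than one point. For $\varepsilon>0$ and $x\in X$: $W^s_\varepsilon(x)=\{y\in X:\ d(f^n(x),f^n(y))\le\varepsilon \text{ for all } n\ge 0\}$ and $W^s(x)=\{y\in X:\ d(f^n(x),f^n(y))\to 0 \text{ as } n\to\infty\}$. A point $x$ is a weak sink if $W^s_\varepsilon(x)$ is a neighborhood of $x$ for every $\varepsilon>0$; $x$ is a sink if it is a weak sink and there exists $\varepsilon>0$ with $W^s_\varepsilon(x)\subset W^s(x)$. $\Omega(f)$ is the non-wandering set: $x\in\Omega(f)$ iff for every neighborhood $U$ of $x$ there is $n\ge1$ with $f^n(U)\cap U\neq\emptyset$. *)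

theory Defs
  imports "HOL-Analysis.Analysis"
begin

definition peano_continuum :: "'a::metric_space set \<Rightarrow> bool" where
  "peano_continuum X \<longleftrightarrow> compact X \<and> connected X \<and> locally connected X
     \<and> (\<exists>x\<in>X. \<exists>y\<in>X. x \<noteq> y)"

definition continuum :: "'a::metric_space set \<Rightarrow> bool" where
  "continuum C \<longleftrightarrow> compact C \<and> connected C \<and> C \<noteq> {}"

definition zit :: "'a set \<Rightarrow> ('a \<Rightarrow> 'a) \<Rightarrow> int \<Rightarrow> 'a \<Rightarrow> 'a" where
  "zit X f n = (if 0 \<le> n then f ^^ nat n else inv_into X f ^^ nat (- n))"

definition cw_expansive :: "'a::metric_space set \<Rightarrow> ('a \<Rightarrow> 'a) \<Rightarrow> bool" where
  "cw_expansive X f \<longleftrightarrow> (\<exists>\<alpha>>0. \<forall>C. C \<subseteq> X \<and> continuum C \<and> (\<exists>x\<in>C. \<exists>y\<in>C. x \<noteq> y)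
      \<longrightarrow> (SUP n::int. diameter (zit X f n ` C)) > \<alpha>)"

definition local_stable :: "'a::metric_space set \<Rightarrow> ('a \<Rightarrow> 'a) \<Rightarrow> real \<Rightarrow> 'a \<Rightarrow> 'a set" where
  "local_stable X f \<epsilon> x = {y \<in> X. \<forall>n::nat. dist ((f ^^ n) x) ((f ^^ n) y) \<le> \<epsilon>}"

definition stable_set :: "'a::metric_space set \<Rightarrow> ('a \<Rightarrow> 'a) \<Rightarrow> 'a \<Rightarrow> 'a set" where
  "stable_set X f x = {y \<in> X. (\<lambda>n. dist ((f ^^ n) x) ((f ^^ n) y)) \<longlonglongrightarrow> 0}"

definition weak_sink :: "'a::metric_space set \<Rightarrow> ('a \<Rightarrow> 'a) \<Rightarrow> 'a \<Rightarrow> bool" where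
  "weak_sink X f x \<longleftrightarrow> x \<in> X \<and> (\<forall>\<epsilon>>0. \<exists>U. openin (top_of_set X) U \<and> x \<in> U \<and> U \<subseteq> local_stable X f \<epsilon> x)"

definition sink :: "'a::metric_space set \<Rightarrow> ('a \<Rightarrow> 'a) \<Rightarrow> 'a \<Rightarrow> bool" where
  "sink X f x \<longleftrightarrow> weak_sink X f x \<and> (\<exists>\<epsilon>>0. local_stable X f \<epsilon> x \<subseteq> stable_set X f x)"

definition nonwandering :: "'a::metric_space set \<Rightarrow> ('a \<Rightarrow> 'a) \<Rightarrow> 'a set" where
  "nonwandering X f = {x \<in> X. \<forall>U. openin (top_of_set X) U \<and> x \<in> U \<longrightarrow>
      (\<exists>n\<ge>1. (f ^^ n) ` U \<inter> U \<noteq> {})}"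

definition periodic_point :: "('a \<Rightarrow> 'a) \<Rightarrow> 'a \<Rightarrow> bool" where
  "periodic_point f x \<longleftrightarrow> (\<exists>n\<ge>1. (f ^^ n) x = x)"

end

theory Submission
  imports Defs
begin

(*
  Let alpha be a cw-expansivity constant and eps = alpha/4. If a connected set V containing x
  lies in the local stable set W^s_eps(x), the diameters of f^n(V) tend to 0: otherwise, along a
  subsequence, the topological upper limit L of the sets f^(m_k)(V) is a nondegenerate continuum,
  and since each f^n(V) stays eps-close to the orbit of x, every iterate f^j(L), j in Z, has
  diameter at most alpha/2, contradicting cw-expansivity. By local connectedness every weak sink
  therefore has an open neighbourhood on which f contracts uniformly. All points of such a
  neighbourhood are weak sinks, and close to a sink they inherit its asymptotic stability, so the
  sinks form an open set. A non-wandering sink x that is not periodic is recurrent; picking a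
  return f^a(x) in the contracting neighbourhood, the orbits of f^a(x) and x merge while f^m(x)
  comes back close to x, which forces f^a(x) = x.
*)

lemma funpow_image_subset: "h ` X \<subseteq> X \<Longrightarrow> (h ^^ n) ` X \<subseteq> X"
  by (induction n) auto

lemma continuous_on_funpow:
  assumes "continuous_on X h" "h ` X \<subseteq> X"
  shows "continuous_on X (h ^^ n)"
proof (induction n)
  case (Suc n)
  have "continuous_on X (h \<circ> h ^^ n)"
    using funpow_image_subset[OF assms(2)]
    by (intro continuous_on_compose[OF Suc continuous_on_subset[OF assms(1)]]) auto
  then show ?case by simp
qed simp

lemma funpow_inv_into_cancel:
  assumes "inj_on h X" "h ` X \<subseteq> X" "w \<in> X"
  shows "(inv_into X h ^^ k) ((h ^^ k) w) = w"
  using assms(3)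
proof (induction k arbitrary: w)
  case (Suc k)
  have "h w \<in> X" using Suc.prems assms(2) by blast
  have "(inv_into X h ^^ Suc k) ((h ^^ Suc k) w) = inv_into X h ((inv_into X h ^^ k) ((h ^^ k) (h w)))"
    by (simp only: funpow.simps(2) comp_apply funpow_swap1[of h])
  also have "\<dots> = w"
    using Suc.IH[OF \<open>h w \<in> X\<close>] Suc.prems assms(1) by simp
  finally show ?case .
qed simp

lemma homeomorphism_inv_into:
  assumes "homeomorphism X Y f g"
  shows "homeomorphism X Y f (inv_into X f)"
proof (rule homeomorphism_cong[OF assms])
  have inj: "inj_on f X"
    using assms by (metis homeomorphism_apply1 inj_on_inverseI)
  fix y assume "y \<in> Y"
  then have "g y \<in> X" "f (g y) = y"
    using assms by (auto simp: homeomorphism_def)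
  then show "inv_into X f y = g y"
    using inv_into_f_f[OF inj] by metis
qed auto

lemma continuous_on_zit:
  assumes "homeomorphism X X f g"
  shows "continuous_on X (zit X f j)"
proof -
  have "continuous_on X (h ^^ n)" if "homeomorphism X X h h'" for h h' n
    using that by (intro continuous_on_funpow) (auto simp: homeomorphism_def)
  then show ?thesis
    using assms homeomorphism_symD[OF homeomorphism_inv_into[OF assms]] by (simp add: zit_def)
qed

lemma zit_funpow:
  assumes "homeomorphism X X f g" "w \<in> X" "0 \<le> int m + j"
  shows "zit X f j ((f ^^ m) w) = (f ^^ nat (int m + j)) w"
proof (cases "0 \<le> j")
  case True
  then have "nat (int m + j) = nat j + m" by simp
  with True show ?thesis by (simp add: zit_def funpow_add)
next
  case False
  define k where "k = nat (- j)"
  have m: "m = k + nat (int m + j)" using False assms(3) unfolding k_def by linarith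
  have "inj_on f X" "f ` X \<subseteq> X"
    using assms(1) by (auto simp: homeomorphism_def intro: inj_on_inverseI)
  moreover have "(f ^^ nat (int m + j)) w \<in> X"
    using funpow_image_subset[OF \<open>f ` X \<subseteq> X\<close>] assms(2) by blast
  ultimately have "(inv_into X f ^^ k) ((f ^^ k) ((f ^^ nat (int m + j)) w)) = (f ^^ nat (int m + j)) w"
    by (rule funpow_inv_into_cancel)
  then show ?thesis
    using False by (subst m) (simp add: zit_def k_def funpow_add)
qed

definition upper_limit :: "(nat \<Rightarrow> 'a::topological_space set) \<Rightarrow> 'a set" where
  "upper_limit A = (\<Inter>N. closure (\<Union>k\<in>{N..}. A k))"

lemma closed_upper_limit: "closed (upper_limit A)"
  unfolding upper_limit_def by (intro closed_INT ballI closed_closure)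

lemma upper_limit_subset:
  assumes "\<And>k. A k \<subseteq> S" "closed S"
  shows "upper_limit A \<subseteq> S"
proof -
  have "upper_limit A \<subseteq> closure (\<Union>k\<in>{0..}. A k)"
    unfolding upper_limit_def by blast
  also have "\<dots> \<subseteq> S"
    using assms by (intro closure_minimal) auto
  finally show ?thesis .
qed

lemma mem_closure_iff_open:
  "p \<in> closure S \<longleftrightarrow> (\<forall>V. open V \<and> p \<in> V \<longrightarrow> S \<inter> V \<noteq> {})"
proof
  assume "p \<in> closure S"
  then show "\<forall>V. open V \<and> p \<in> V \<longrightarrow> S \<inter> V \<noteq> {}"
    using open_Int_closure_eq_empty by blast
qed (unfold closure_iff_nhds_not_empty, blast)

lemma mem_upper_limit_iff:
  "p \<in> upper_limit A \<longleftrightarrow> (\<forall>N V. open V \<and> p \<in> V \<longrightarrow> (\<exists>k\<ge>N. A k \<inter> V \<noteq> {}))"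
proof -
  have "(\<Union>k\<in>{N..}. A k) \<inter> V \<noteq> {} \<longleftrightarrow> (\<exists>k\<ge>N. A k \<inter> V \<noteq> {})" for N V
    by auto
  then show ?thesis
    unfolding upper_limit_def INT_iff mem_closure_iff_open by simp
qed

lemma upper_limit_memI:
  assumes "filterlim r at_top sequentially" "\<And>k. s k \<in> A (r k)" "s \<longlonglongrightarrow> c"
  shows "c \<in> upper_limit A"
  unfolding mem_upper_limit_iff
proof (intro allI impI)
  fix N V assume V: "open V \<and> c \<in> V"
  have "eventually (\<lambda>k. N \<le> r k) sequentially"
    using assms(1) by (simp add: filterlim_at_top)
  moreover have "eventually (\<lambda>k. s k \<in> V) sequentially"
    using assms(3) V by (blast intro: topological_tendstoD)
  ultimately obtain K where "\<forall>k\<ge>K. N \<le> r k \<and> s k \<in> V"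
    unfolding eventually_sequentially by (metis le_trans nat_le_linear)
  then show "\<exists>k\<ge>N. A k \<inter> V \<noteq> {}"
    using assms(2) by blast
qed

lemma image_upper_limit_subset:
  assumes "continuous_on X h" "\<And>k. A k \<subseteq> X" "closed X"
  shows "h ` upper_limit A \<subseteq> upper_limit (\<lambda>k. h ` A k)"
proof
  fix y assume "y \<in> h ` upper_limit A"
  then obtain p where p: "p \<in> upper_limit A" and y: "y = h p"
    by blast
  have "p \<in> X"
    using upper_limit_subset[of A X] assms(2,3) p by blast
  show "y \<in> upper_limit (\<lambda>k. h ` A k)"
    unfolding mem_upper_limit_iff
  proof (intro allI impI)
    fix N W assume W: "open W \<and> y \<in> W"
    obtain V where V: "open V" "X \<inter> h -` W = V \<inter> X"
      using continuous_openin_preimage_gen[OF assms(1), of W] W by (auto simp: openin_open)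
    have "p \<in> X \<inter> h -` W"
      using \<open>p \<in> X\<close> W y by simp
    then have "p \<in> V"
      using V(2) by blast
    then obtain k w where "k \<ge> N" "w \<in> A k" "w \<in> V"
      using p V(1) unfolding mem_upper_limit_iff by blast
    moreover have "w \<in> X \<inter> h -` W"
      using V(2) assms(2) calculation(2,3) by blast
    ultimately show "\<exists>k\<ge>N. h ` A k \<inter> W \<noteq> {}"
      by blast
  qed
qed

lemma upper_limit_subset_cball:
  fixes A :: "nat \<Rightarrow> 'a::metric_space set"
  assumes "eventually (\<lambda>k. A k \<subseteq> cball (q k) \<epsilon>) sequentially" "q \<longlonglongrightarrow> c"
  shows "upper_limit A \<subseteq> cball c \<epsilon>"
proof
  fix p assume p: "p \<in> upper_limit A"
  have "dist c p \<le> \<epsilon> + e" if "e > 0" for e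
  proof -
    have "eventually (\<lambda>k. A k \<subseteq> cball (q k) \<epsilon> \<and> dist (q k) c < e / 2) sequentially"
      using assms(1) tendstoD[OF assms(2), of "e / 2"] that by (auto intro: eventually_conj)
    then obtain N where N: "\<And>k. k \<ge> N \<Longrightarrow> A k \<subseteq> cball (q k) \<epsilon> \<and> dist (q k) c < e / 2"
      unfolding eventually_sequentially by blast
    have "\<exists>k\<ge>N. A k \<inter> ball p (e / 2) \<noteq> {}"
      using p that unfolding mem_upper_limit_iff by simp
    then obtain k w where "k \<ge> N" "w \<in> A k" "dist p w < e / 2"
      by auto
    then have "dist c (q k) < e / 2" "dist (q k) w \<le> \<epsilon>" "dist w p < e / 2"
      using N[of k] by (auto simp: dist_commute)
    then show ?thesis
      using dist_triangle[of c p "q k"] dist_triangle[of "q k" p w] by linarith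
  qed
  then show "p \<in> cball c \<epsilon>"
    by (simp add: field_le_epsilon)
qed

lemma upper_limit_far_points:
  fixes A :: "nat \<Rightarrow> 'a::metric_space set"
  assumes "compact X" "\<And>k. A k \<subseteq> X" "\<And>k. \<exists>y\<in>A k. \<exists>z\<in>A k. \<delta> < dist y z"
  obtains a b where "a \<in> upper_limit A" "b \<in> upper_limit A" "\<delta> \<le> dist a b"
proof -
  obtain y z where yz: "\<And>k. y k \<in> A k" "\<And>k. z k \<in> A k" "\<And>k. \<delta> < dist (y k) (z k)"
    using assms(3) by metis
  have seqX: "seq_compact X"
    using assms(1) by (rule compact_imp_seq_compact)
  have "\<forall>k. y k \<in> X"
    using assms(2) yz(1) by blast
  then obtain a r1 where r1: "strict_mono r1" "(y \<circ> r1) \<longlonglongrightarrow> a"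
    using seq_compactE[OF seqX] by blast
  have "\<forall>k. (z \<circ> r1) k \<in> X"
    using assms(2) yz(2) by auto
  then obtain b r2 where r2: "strict_mono r2" "(z \<circ> r1 \<circ> r2) \<longlonglongrightarrow> b"
    using seq_compactE[OF seqX] by blast
  define r where "r = r1 \<circ> r2"
  have r: "filterlim r at_top sequentially"
    unfolding r_def using filterlim_subseq strict_mono_o[OF r1(1) r2(1)] by blast
  have ya: "(y \<circ> r) \<longlonglongrightarrow> a"
    using LIMSEQ_subseq_LIMSEQ[OF r1(2) r2(1)] by (simp add: r_def comp_assoc)
  have zb: "(z \<circ> r) \<longlonglongrightarrow> b"
    using r2(2) by (simp add: r_def comp_assoc)
  have "a \<in> upper_limit A" "b \<in> upper_limit A"
    using upper_limit_memI[OF r _ ya] upper_limit_memI[OF r _ zb] yz(1,2) by auto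
  moreover have "\<delta> \<le> dist a b"
  proof (rule LIMSEQ_le_const)
    show "(\<lambda>k. dist ((y \<circ> r) k) ((z \<circ> r) k)) \<longlonglongrightarrow> dist a b"
      using ya zb by (rule tendsto_dist)
    show "\<exists>N. \<forall>k\<ge>N. \<delta> \<le> dist ((y \<circ> r) k) ((z \<circ> r) k)"
      using yz(3) less_imp_le by auto
  qed
  ultimately show ?thesis
    using that by blast
qed

lemma upper_limit_escapes_open:
  fixes A :: "nat \<Rightarrow> 'a::metric_space set"
  assumes "compact X" "\<And>k. A k \<subseteq> X" "open W" "\<And>N. \<exists>k\<ge>N. \<not> A k \<subseteq> W"
  obtains c where "c \<in> upper_limit A" "c \<notin> W"
proof -
  have "\<forall>N. \<exists>k w. N \<le> k \<and> w \<in> A k \<and> w \<notin> W"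
    using assms(4) by blast
  then obtain r s where rs: "\<And>N. N \<le> r N \<and> s N \<in> A (r N) \<and> s N \<notin> W"
    by metis
  have "seq_compact (X - W)"
    using assms(1,3) by (intro compact_imp_seq_compact compact_diff)
  moreover have "\<forall>N. s N \<in> X - W"
    using rs assms(2) by blast
  ultimately obtain c r' where c: "c \<in> X - W" "strict_mono r'" "(s \<circ> r') \<longlonglongrightarrow> c"
    by (rule seq_compactE)
  have "k \<le> (r \<circ> r') k" for k
    using seq_suble[OF c(2), of k] rs[of "r' k"] by simp
  then have "filterlim (r \<circ> r') at_top sequentially"
    by (intro filterlim_at_top_mono[OF filterlim_ident] always_eventually) simp
  then have "c \<in> upper_limit A"
    using c(3) rs by (intro upper_limit_memI[of "r \<circ> r'" "s \<circ> r'"]) auto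
  with c(1) that show ?thesis
    by blast
qed

lemma separation_normal_metric:
  fixes P Q :: "'a::metric_space set"
  assumes "closed P" "closed Q" "P \<inter> Q = {}"
  obtains U V where "open U" "open V" "P \<subseteq> U" "Q \<subseteq> V" "U \<inter> V = {}"
proof -
  have "normal_space (euclidean :: 'a topology)"
    by (rule metrizable_imp_normal_space[OF metrizable_space_euclidean])
  then obtain U V where "openin euclidean U" "openin euclidean V" "P \<subseteq> U" "Q \<subseteq> V" "disjnt U V"
    using assms unfolding normal_space_def closed_closedin by (metis disjnt_def)
  then show ?thesis
    using that by (simp add: disjnt_def)
qed

lemma upper_limit_subset_open_part:
  fixes A :: "nat \<Rightarrow> 'a::metric_space set"
  assumes "compact X" "\<And>k. A k \<subseteq> X" "\<And>k. connected (A k)" "\<And>k. p k \<in> A k" "p \<longlonglongrightarrow> p0"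
    and "open U" "open V" "U \<inter> V = {}" "upper_limit A \<subseteq> U \<union> V" "p0 \<in> U"
  shows "upper_limit A \<subseteq> U"
proof
  fix q assume q: "q \<in> upper_limit A"
  show "q \<in> U"
  proof (rule ccontr)
    assume "q \<notin> U"
    then have "q \<in> V"
      using q assms(9) by blast
    have "\<exists>k\<ge>N. \<not> A k \<subseteq> U \<union> V" for N
    proof -
      obtain K where K: "\<And>k. k \<ge> K \<Longrightarrow> p k \<in> U"
        using topological_tendstoD[OF assms(5,6,10)] unfolding eventually_sequentially by auto
      obtain k where k: "k \<ge> max N K" "A k \<inter> V \<noteq> {}"
        using q \<open>q \<in> V\<close> assms(7) unfolding mem_upper_limit_iff by blast
      have "U \<inter> A k \<noteq> {}"
        using K[of k] k(1) assms(4)[of k] by auto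
      then have "\<not> A k \<subseteq> U \<union> V"
        using connectedD[OF assms(3)[of k] assms(6,7)] assms(8) k(2) by blast
      then show ?thesis
        using k(1) by auto
    qed
    then obtain c where "c \<in> upper_limit A" "c \<notin> U \<union> V"
      using upper_limit_escapes_open[of X A "U \<union> V"] assms(1,2,6,7) by blast
    then show False
      using assms(9) by blast
  qed
qed

lemma connected_upper_limit:
  fixes A :: "nat \<Rightarrow> 'a::metric_space set"
  assumes "compact X" "\<And>k. A k \<subseteq> X" "\<And>k. connected (A k)" "\<And>k. p k \<in> A k" "p \<longlonglongrightarrow> p0"
  shows "connected (upper_limit A)"
proof (unfold connected_closed_set[OF closed_upper_limit], clarify)
  fix P Q
  assume PQ: "closed P" "closed Q" "P \<noteq> {}" "Q \<noteq> {}" "P \<union> Q = upper_limit A" "P \<inter> Q = {}"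
  obtain U V where UV: "open U" "open V" "P \<subseteq> U" "Q \<subseteq> V" "U \<inter> V = {}"
    using separation_normal_metric[OF PQ(1,2,6)] by blast
  have "p0 \<in> upper_limit A"
    using assms(4,5) by (intro upper_limit_memI[OF filterlim_ident, of p]) auto
  then consider "p0 \<in> U" | "p0 \<in> V"
    using PQ(5) UV(3,4) by blast
  then show False
  proof cases
    case 1
    then have "upper_limit A \<subseteq> U"
      using upper_limit_subset_open_part[OF assms(1) _ _ _ assms(5), of A U V] assms(2-4) UV PQ(5)
      by blast
    then show False
      using PQ(4,5) UV(4,5) by blast
  next
    case 2
    then have "upper_limit A \<subseteq> V"
      using upper_limit_subset_open_part[OF assms(1) _ _ _ assms(5), of A V U] assms(2-4) UV PQ(5)
      by blast
    then show False
      using PQ(3,5) UV(3,5) by blast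
  qed
qed

definition iterates_shrink :: "('a::metric_space \<Rightarrow> 'a) \<Rightarrow> 'a set \<Rightarrow> bool" where
  "iterates_shrink f V \<longleftrightarrow>
     (\<forall>\<delta>>0. \<exists>N. \<forall>m\<ge>N. \<forall>y\<in>V. \<forall>z\<in>V. dist ((f ^^ m) y) ((f ^^ m) z) \<le> \<delta>)"

lemma iterates_shrink_subset: "iterates_shrink f V \<Longrightarrow> W \<subseteq> V \<Longrightarrow> iterates_shrink f W"
  unfolding iterates_shrink_def by (meson subsetD)

lemma diameter_le_of_subset_cball:
  fixes S :: "'a::metric_space set"
  assumes "S \<subseteq> cball c r" "0 \<le> r"
  shows "diameter S \<le> 2 * r"
proof -
  have "dist u v \<le> 2 * r" if "u \<in> S" "v \<in> S" for u v
  proof -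
    have "dist c u \<le> r" "dist c v \<le> r"
      using assms(1) that by auto
    then show ?thesis
      using dist_triangle3[of u v c] by linarith
  qed
  then show ?thesis
    unfolding diameter_def using assms(2) by (auto intro!: cSUP_least)
qed

lemma zit_image_upper_limit_subset_cball:
  assumes hom: "homeomorphism X X f g" and "closed X"
    and V: "V \<subseteq> local_stable X f \<epsilon> x" and "x \<in> X"
    and m: "filterlim m at_top sequentially"
    and p: "(\<lambda>k. (f ^^ m k) x) \<longlonglongrightarrow> p" "p \<in> X"
  shows "zit X f j ` upper_limit (\<lambda>k. (f ^^ m k) ` V) \<subseteq> cball (zit X f j p) \<epsilon>"
proof -
  have fX: "(f ^^ n) ` X \<subseteq> X" for n
    using hom by (intro funpow_image_subset) (simp add: homeomorphism_def)
  have VX: "V \<subseteq> X"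
    using V by (auto simp: local_stable_def)
  have "zit X f j ` upper_limit (\<lambda>k. (f ^^ m k) ` V) \<subseteq> upper_limit (\<lambda>k. zit X f j ` (f ^^ m k) ` V)"
    using continuous_on_zit[OF hom] fX VX \<open>closed X\<close> by (intro image_upper_limit_subset) blast+
  also have "\<dots> \<subseteq> cball (zit X f j p) \<epsilon>"
  proof (rule upper_limit_subset_cball)
    have "eventually (\<lambda>k. nat (- j) \<le> m k) sequentially"
      using m by (simp add: filterlim_at_top)
    then show "eventually (\<lambda>k. zit X f j ` (f ^^ m k) ` V \<subseteq> cball (zit X f j ((f ^^ m k) x)) \<epsilon>) sequentially"
    proof (rule eventually_mono)
      fix k assume "nat (- j) \<le> m k"
      then have j: "0 \<le> int (m k) + j"
        by linarith
      show "zit X f j ` (f ^^ m k) ` V \<subseteq> cball (zit X f j ((f ^^ m k) x)) \<epsilon>"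
        using V VX zit_funpow[OF hom _ j] \<open>x \<in> X\<close> by (auto simp: local_stable_def)
    qed
    show "(\<lambda>k. zit X f j ((f ^^ m k) x)) \<longlonglongrightarrow> zit X f j p"
      using fX \<open>x \<in> X\<close>
      by (intro continuous_on_tendsto_compose[OF continuous_on_zit[OF hom] p] always_eventually) blast
  qed
  finally show ?thesis .
qed

lemma nondegenerate_continuum_upper_limit:
  fixes A :: "nat \<Rightarrow> 'a::metric_space set"
  assumes "compact X" "\<And>k. A k \<subseteq> X" "\<And>k. connected (A k)" "\<And>k. p k \<in> A k" "p \<longlonglongrightarrow> p0"
    and "\<delta> > 0" "\<And>k. \<exists>y\<in>A k. \<exists>z\<in>A k. \<delta> < dist y z"
  shows "continuum (upper_limit A)" "\<exists>a\<in>upper_limit A. \<exists>b\<in>upper_limit A. a \<noteq> b"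
proof -
  have "upper_limit A \<subseteq> X"
    by (rule upper_limit_subset[of A X, OF assms(2) compact_imp_closed[OF assms(1)]])
  then have "compact (upper_limit A)"
    using compact_Int_closed[OF assms(1) closed_upper_limit, of A] by (simp add: Int_absorb1)
  moreover have "connected (upper_limit A)"
    using assms(1-5) by (rule connected_upper_limit)
  moreover obtain a b where ab: "a \<in> upper_limit A" "b \<in> upper_limit A" "\<delta> \<le> dist a b"
    using upper_limit_far_points[of X A \<delta>] assms(1,2,7) by blast
  moreover have "a \<noteq> b"
    using ab(3) \<open>\<delta> > 0\<close> by auto
  ultimately show "continuum (upper_limit A)" "\<exists>a\<in>upper_limit A. \<exists>b\<in>upper_limit A. a \<noteq> b"
    by (auto simp: continuum_def)
qed

lemma not_iterates_shrink_subsequence: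
  assumes "compact X" "f ` X \<subseteq> X" "x \<in> V" "V \<subseteq> X" "\<not> iterates_shrink f V"
  obtains \<delta> m p where "\<delta> > 0" "filterlim m at_top sequentially" "p \<in> X" "(\<lambda>k. (f ^^ m k) x) \<longlonglongrightarrow> p"
    "\<And>k. \<exists>y\<in>V. \<exists>z\<in>V. \<delta> < dist ((f ^^ m k) y) ((f ^^ m k) z)"
proof -
  obtain \<delta> where "\<delta> > 0" "\<forall>N. \<exists>m\<ge>N. \<exists>y\<in>V. \<exists>z\<in>V. \<delta> < dist ((f ^^ m) y) ((f ^^ m) z)"
    using assms(5) unfolding iterates_shrink_def by (auto simp: not_le)
  then obtain m' where m': "\<And>k. k \<le> m' k \<and> (\<exists>y\<in>V. \<exists>z\<in>V. \<delta> < dist ((f ^^ m' k) y) ((f ^^ m' k) z))"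
    by metis
  have "\<forall>k. (f ^^ m' k) x \<in> X"
    using funpow_image_subset[OF assms(2)] assms(3,4) by blast
  then obtain p r where p: "p \<in> X" "strict_mono r" "((\<lambda>k. (f ^^ m' k) x) \<circ> r) \<longlonglongrightarrow> p"
    by (rule seq_compactE[OF compact_imp_seq_compact[OF assms(1)]])
  have "k \<le> (m' \<circ> r) k" for k
    using seq_suble[OF p(2), of k] m'[of "r k"] by simp
  then have "filterlim (m' \<circ> r) at_top sequentially"
    by (intro filterlim_at_top_mono[OF filterlim_ident] always_eventually) simp
  moreover have "(\<lambda>k. (f ^^ (m' \<circ> r) k) x) \<longlonglongrightarrow> p"
    using p(3) by (simp add: comp_def)
  ultimately show ?thesis
    using that[of \<delta> "m' \<circ> r" p] \<open>\<delta> > 0\<close> p(1) m' by simp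
qed

lemma cw_expansive_connected_stable_sets_shrink:
  assumes "compact X" and hom: "homeomorphism X X f g" and "cw_expansive X f"
  obtains \<epsilon> where "\<epsilon> > 0"
    "\<And>x V. x \<in> V \<Longrightarrow> connected V \<Longrightarrow> V \<subseteq> local_stable X f \<epsilon> x \<Longrightarrow> iterates_shrink f V"
proof -
  obtain \<alpha> where "\<alpha> > 0" and cw: "\<forall>C. C \<subseteq> X \<and> continuum C \<and> (\<exists>a\<in>C. \<exists>b\<in>C. a \<noteq> b)
      \<longrightarrow> \<alpha> < (SUP n::int. diameter (zit X f n ` C))"
    using assms(3) unfolding cw_expansive_def by meson
  have fX: "f ` X \<subseteq> X" and cont: "continuous_on X f"
    using hom by (simp_all add: homeomorphism_def)
  have "iterates_shrink f V"
    if V: "x \<in> V" "connected V" "V \<subseteq> local_stable X f (\<alpha> / 4) x" for x V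
  proof (rule ccontr)
    have VX: "V \<subseteq> X"
      using V(3) by (auto simp: local_stable_def)
    assume "\<not> iterates_shrink f V"
    then obtain \<delta> m p where "\<delta> > 0" and m: "filterlim m at_top sequentially" and p: "p \<in> X"
      "(\<lambda>k. (f ^^ m k) x) \<longlonglongrightarrow> p" and far: "\<And>k. \<exists>y\<in>V. \<exists>z\<in>V. \<delta> < dist ((f ^^ m k) y) ((f ^^ m k) z)"
      using not_iterates_shrink_subsequence[OF \<open>compact X\<close> fX V(1) VX] by blast
    define L where "L = upper_limit (\<lambda>k. (f ^^ m k) ` V)"
    have A: "(f ^^ m k) ` V \<subseteq> X" "connected ((f ^^ m k) ` V)" "(f ^^ m k) x \<in> (f ^^ m k) ` V" for k
      using funpow_image_subset[OF fX] continuous_on_funpow[OF cont fX] VX V(1,2)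
      by (blast, meson connected_continuous_image continuous_on_subset, blast)
    have far': "\<exists>y\<in>(f ^^ m k) ` V. \<exists>z\<in>(f ^^ m k) ` V. \<delta> < dist y z" for k
      using far[of k] by blast
    have "continuum L" "\<exists>a\<in>L. \<exists>b\<in>L. a \<noteq> b"
      unfolding L_def
      using nondegenerate_continuum_upper_limit[of X "\<lambda>k. (f ^^ m k) ` V" "\<lambda>k. (f ^^ m k) x" p \<delta>,
          OF \<open>compact X\<close> A p(2) \<open>\<delta> > 0\<close> far'] .
    moreover have "L \<subseteq> X"
      unfolding L_def using funpow_image_subset[OF fX] VX \<open>compact X\<close>
      by (intro upper_limit_subset compact_imp_closed) blast+
    ultimately have "\<alpha> < (SUP n::int. diameter (zit X f n ` L))"
      using cw by blast
    moreover have "diameter (zit X f n ` L) \<le> \<alpha> / 2" for n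
      using zit_image_upper_limit_subset_cball[OF hom _ V(3) _ m p(2,1), of n]
        diameter_le_of_subset_cball[of _ _ "\<alpha> / 4"] compact_imp_closed[OF \<open>compact X\<close>] V(1) VX \<open>\<alpha> > 0\<close>
      unfolding L_def by auto
    then have "(SUP n::int. diameter (zit X f n ` L)) \<le> \<alpha> / 2"
      by (intro cSUP_least) auto
    ultimately show False
      using \<open>\<alpha> > 0\<close> by linarith
  qed
  moreover have "\<alpha> / 4 > 0"
    using \<open>\<alpha> > 0\<close> by simp
  ultimately show ?thesis
    using that by blast
qed

lemma weak_sink_has_shrinking_nbhd:
  assumes "compact X" "locally connected X" "homeomorphism X X f g" "cw_expansive X f"
    and "weak_sink X f x"
  obtains V where "openin (top_of_set X) V" "x \<in> V" "iterates_shrink f V"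
proof -
  obtain \<epsilon> where "\<epsilon> > 0" and shrink:
    "\<And>x V. x \<in> V \<Longrightarrow> connected V \<Longrightarrow> V \<subseteq> local_stable X f \<epsilon> x \<Longrightarrow> iterates_shrink f V"
    using cw_expansive_connected_stable_sets_shrink[OF assms(1,3,4)] by blast
  then obtain U where "openin (top_of_set X) U" "x \<in> U" "U \<subseteq> local_stable X f \<epsilon> x"
    using assms(5) unfolding weak_sink_def by blast
  then obtain V where "openin (top_of_set X) V" "connected V" "x \<in> V" "V \<subseteq> U"
    using assms(2) unfolding locally_connected by meson
  then show ?thesis
    using that shrink \<open>U \<subseteq> local_stable X f \<epsilon> x\<close> by blast
qed

lemma weak_sink_if_shrinking_nbhd:
  assumes "continuous_on X f" "f ` X \<subseteq> X"
    and "openin (top_of_set X) V" "iterates_shrink f V" "y \<in> V"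
  shows "weak_sink X f y"
  unfolding weak_sink_def
proof (intro conjI allI impI)
  show "y \<in> X"
    using openin_imp_subset[OF assms(3)] assms(5) by blast
  fix \<delta> :: real assume "\<delta> > 0"
  then obtain N where N: "\<forall>m\<ge>N. \<forall>a\<in>V. \<forall>b\<in>V. dist ((f ^^ m) a) ((f ^^ m) b) \<le> \<delta>"
    using assms(4) unfolding iterates_shrink_def by blast
  define W where
    "W = V \<inter> ((\<Inter>n\<in>{..<N}. X \<inter> (f ^^ n) -` ball ((f ^^ n) y) \<delta>) \<inter> topspace (top_of_set X))"
  have "openin (top_of_set X) (X \<inter> (f ^^ n) -` ball ((f ^^ n) y) \<delta>)" for n
    using continuous_on_funpow[OF assms(1,2)] open_ball by (rule continuous_openin_preimage_gen)
  then have "openin (top_of_set X) W"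
    unfolding W_def by (intro openin_Int[OF assms(3)] openin_INT) auto
  moreover have "y \<in> W"
    unfolding W_def using assms(5) \<open>y \<in> X\<close> \<open>\<delta> > 0\<close> by simp
  moreover have "W \<subseteq> local_stable X f \<delta> y"
  proof
    fix z assume z: "z \<in> W"
    have "dist ((f ^^ n) y) ((f ^^ n) z) \<le> \<delta>" for n
    proof (cases "n < N")
      case True
      then have "(f ^^ n) z \<in> ball ((f ^^ n) y) \<delta>"
        using z unfolding W_def by blast
      then show ?thesis
        by simp
    next
      case False
      then show ?thesis
        using N z assms(5) unfolding W_def by auto
    qed
    then show "z \<in> local_stable X f \<delta> y"
      using z unfolding W_def local_stable_def by auto
  qed
  ultimately show "\<exists>U. openin (top_of_set X) U \<and> y \<in> U \<and> U \<subseteq> local_stable X f \<delta> y"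
    by blast
qed

lemma local_stable_half_subset_stable_set:
  assumes "local_stable X f \<epsilon> x \<subseteq> stable_set X f x" "y \<in> local_stable X f (\<epsilon> / 2) x"
  shows "local_stable X f (\<epsilon> / 2) y \<subseteq> stable_set X f y"
proof
  fix z assume z: "z \<in> local_stable X f (\<epsilon> / 2) y"
  have y: "dist ((f ^^ n) x) ((f ^^ n) y) \<le> \<epsilon> / 2" for n
    using assms(2) by (simp add: local_stable_def)
  have zy: "dist ((f ^^ n) y) ((f ^^ n) z) \<le> \<epsilon> / 2" for n
    using z by (simp add: local_stable_def)
  have "dist ((f ^^ n) x) ((f ^^ n) z) \<le> \<epsilon>" for n
    using y[of n] zy[of n] dist_triangle[of "(f ^^ n) x" "(f ^^ n) z" "(f ^^ n) y"] by linarith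
  moreover have "dist ((f ^^ n) x) ((f ^^ n) y) \<le> \<epsilon>" for n
    using y[of n] zero_le_dist[of "(f ^^ n) x" "(f ^^ n) y"] by linarith
  ultimately have "z \<in> local_stable X f \<epsilon> x" "y \<in> local_stable X f \<epsilon> x"
    using assms(2) z by (simp_all add: local_stable_def)
  then have "(\<lambda>n. dist ((f ^^ n) x) ((f ^^ n) y) + dist ((f ^^ n) x) ((f ^^ n) z)) \<longlonglongrightarrow> 0"
    using assms(1) unfolding stable_set_def by (auto intro: tendsto_add_zero)
  then have "(\<lambda>n. dist ((f ^^ n) y) ((f ^^ n) z)) \<longlonglongrightarrow> 0"
    by (rule Lim_null_comparison[rotated]) (simp add: dist_triangle3)
  then show "z \<in> stable_set X f y"
    using z unfolding local_stable_def stable_set_def by simp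
qed

lemma openin_sinks:
  assumes "compact X" "locally connected X" and hom: "homeomorphism X X f g" and "cw_expansive X f"
  shows "openin (top_of_set X) {x \<in> X. sink X f x}"
proof (subst openin_subopen, intro ballI)
  fix x assume "x \<in> {x \<in> X. sink X f x}"
  then have "sink X f x"
    by simp
  then obtain \<epsilon> where "\<epsilon> > 0" and sink_x: "local_stable X f \<epsilon> x \<subseteq> stable_set X f x"
    unfolding sink_def by blast
  obtain U where U: "openin (top_of_set X) U" "x \<in> U" "U \<subseteq> local_stable X f (\<epsilon> / 2) x"
    using \<open>sink X f x\<close> \<open>\<epsilon> > 0\<close> unfolding sink_def weak_sink_def by (meson half_gt_zero)
  have "weak_sink X f x"
    using \<open>sink X f x\<close> by (simp add: sink_def)
  then obtain V where V: "openin (top_of_set X) V" "x \<in> V" "iterates_shrink f V"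
    using weak_sink_has_shrinking_nbhd[OF assms] by blast
  have "sink X f y" if "y \<in> U \<inter> V" for y
  proof -
    have "weak_sink X f y"
      using hom that openin_Int[OF U(1) V(1)] iterates_shrink_subset[OF V(3), of "U \<inter> V"]
      by (intro weak_sink_if_shrinking_nbhd[of X f "U \<inter> V"]) (auto simp: homeomorphism_def)
    moreover have "local_stable X f (\<epsilon> / 2) y \<subseteq> stable_set X f y"
      using local_stable_half_subset_stable_set[OF sink_x] U(3) that by blast
    ultimately show ?thesis
      unfolding sink_def using \<open>\<epsilon> > 0\<close> half_gt_zero by blast
  qed
  then show "\<exists>T. openin (top_of_set X) T \<and> x \<in> T \<and> T \<subseteq> {x \<in> X. sink X f x}"
    using openin_Int[OF U(1) V(1)] U(2) V(2) openin_imp_subset[OF V(1)] by blast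
qed

lemma nonwandering_aperiodic_returns_late:
  assumes "continuous_on X f" "f ` X \<subseteq> X"
    and "x \<in> nonwandering X f" "\<not> periodic_point f x" "openin (top_of_set X) U" "x \<in> U"
  shows "\<exists>n\<ge>N. (f ^^ n) ` U \<inter> U \<noteq> {}"
proof -
  define r where "r n = dist ((f ^^ n) x) x / 2" for n
  \<comment> \<open>for \<open>1 \<le> n\<close>, \<open>f ^^ n\<close> maps \<open>B n\<close> off itself, so returns before time \<open>N\<close> are excluded\<close>
  define B where "B n = X \<inter> (f ^^ n) -` ball ((f ^^ n) x) (r n) \<inter> ball x (r n)" for n
  have "openin (top_of_set X) (B n)" for n
    unfolding B_def
    using continuous_openin_preimage_gen[OF continuous_on_funpow[OF assms(1,2)] open_ball]
    by (rule openin_Int_open) simp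
  define W where "W = U \<inter> ((\<Inter>k\<in>{1..<N}. B k) \<inter> topspace (top_of_set X))"
  have "openin (top_of_set X) W"
    unfolding W_def using \<open>\<And>n. openin (top_of_set X) (B n)\<close>
    by (intro openin_Int[OF assms(5)] openin_INT) auto
  moreover have "x \<in> W"
  proof -
    have "x \<in> X"
      using openin_imp_subset[OF assms(5)] assms(6) by blast
    moreover have "r k > 0" if "k \<ge> 1" for k
      using assms(4) that by (auto simp: r_def periodic_point_def)
    ultimately show ?thesis
      using assms(6) by (auto simp: W_def B_def)
  qed
  moreover have "\<forall>U. openin (top_of_set X) U \<and> x \<in> U \<longrightarrow> (\<exists>n\<ge>1. (f ^^ n) ` U \<inter> U \<noteq> {})"
    using assms(3) by (simp add: nonwandering_def)
  ultimately obtain n where n: "n \<ge> 1" "(f ^^ n) ` W \<inter> W \<noteq> {}"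
    by blast
  then obtain z where z: "z \<in> W" "(f ^^ n) z \<in> W"
    by blast
  have "\<not> n < N"
  proof
    assume "n < N"
    then have "dist ((f ^^ n) z) x < r n" "dist ((f ^^ n) z) ((f ^^ n) x) < r n"
      using z n by (auto simp: W_def B_def dist_commute)
    then show False
      using dist_triangle3[of "(f ^^ n) x" x "(f ^^ n) z"] unfolding r_def by (simp add: dist_commute)
  qed
  moreover have "(f ^^ n) z \<in> (f ^^ n) ` U \<inter> U"
    using z by (auto simp: W_def)
  ultimately show ?thesis
    by (metis empty_iff not_less)
qed

lemma recurrent_if_nonwandering_shrinking:
  assumes "continuous_on X f" "f ` X \<subseteq> X"
    and "x \<in> nonwandering X f" "\<not> periodic_point f x"
    and "openin (top_of_set X) V" "x \<in> V" "iterates_shrink f V" "\<delta> > 0"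
  shows "\<exists>m\<ge>N. dist ((f ^^ m) x) x < \<delta>"
proof -
  obtain N' where N': "\<forall>m\<ge>N'. \<forall>a\<in>V. \<forall>b\<in>V. dist ((f ^^ m) a) ((f ^^ m) b) \<le> \<delta> / 2"
    using assms(7,8) unfolding iterates_shrink_def by (meson half_gt_zero)
  define U where "U = X \<inter> ball x (\<delta> / 2) \<inter> V"
  have "openin (top_of_set X) U" "x \<in> U"
    unfolding U_def using assms(5,6,8) openin_imp_subset[OF assms(5)]
    by (auto intro: openin_Int openin_open_Int)
  then obtain n where n: "n \<ge> max N N'" "(f ^^ n) ` U \<inter> U \<noteq> {}"
    using nonwandering_aperiodic_returns_late[OF assms(1-4)] by blast
  then obtain z where z: "z \<in> U" "(f ^^ n) z \<in> U"
    by blast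
  have "dist ((f ^^ n) x) ((f ^^ n) z) \<le> \<delta> / 2"
    using N' n(1) z(1) assms(6) by (simp add: U_def)
  moreover have "dist ((f ^^ n) z) x < \<delta> / 2"
    using z(2) by (simp add: U_def dist_commute)
  ultimately have "dist ((f ^^ n) x) x < \<delta>"
    using dist_triangle[of "(f ^^ n) x" x "(f ^^ n) z"] by linarith
  then show ?thesis
    using n(1) by auto
qed

lemma periodic_point_if_nonwandering_shrinking:
  assumes "continuous_on X f" "f ` X \<subseteq> X" "x \<in> nonwandering X f"
    and "openin (top_of_set X) V" "x \<in> V" "iterates_shrink f V"
  shows "periodic_point f x"
proof (rule ccontr)
  assume aperiodic: "\<not> periodic_point f x"
  note recurrent = recurrent_if_nonwandering_shrinking[OF assms(1-3) aperiodic assms(4-6)]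
  have "x \<in> X"
    using openin_imp_subset[OF assms(4)] assms(5) by blast
  obtain r where "r > 0" "ball x r \<inter> X \<subseteq> V"
    using assms(4,5) unfolding openin_contains_ball by meson
  moreover obtain a where a: "a \<ge> 1" "dist ((f ^^ a) x) x < r"
    using recurrent[OF \<open>r > 0\<close>, of 1] by blast
  moreover have "(f ^^ a) x \<in> X"
    using funpow_image_subset[OF assms(2), of a] \<open>x \<in> X\<close> by blast
  ultimately have "(f ^^ a) x \<in> V"
    by (auto simp: dist_commute)
  have "dist ((f ^^ a) x) x < e" if "e > 0" for e
  proof -
    have "e / 3 > 0" "e / 4 > 0"
      using \<open>e > 0\<close> by simp_all
    obtain \<rho> where "\<rho> > 0"
      and \<rho>: "\<forall>z\<in>X. dist z x < \<rho> \<longrightarrow> dist ((f ^^ a) z) ((f ^^ a) x) < e / 3"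
      using continuous_on_iff[THEN iffD1, OF continuous_on_funpow[OF assms(1,2)], rule_format,
          OF \<open>x \<in> X\<close> \<open>e / 3 > 0\<close>]
      by blast
    obtain N where N: "\<forall>m\<ge>N. \<forall>p\<in>V. \<forall>q\<in>V. dist ((f ^^ m) p) ((f ^^ m) q) \<le> e / 4"
      using assms(6) \<open>e / 4 > 0\<close> unfolding iterates_shrink_def by blast
    obtain m where m: "m \<ge> N" "dist ((f ^^ m) x) x < min \<rho> (e / 3)"
      using recurrent[of "min \<rho> (e / 3)" N] \<open>\<rho> > 0\<close> \<open>e > 0\<close> by auto
    have "(f ^^ m) x \<in> X"
      using funpow_image_subset[OF assms(2), of m] \<open>x \<in> X\<close> by blast
    then have "dist ((f ^^ a) ((f ^^ m) x)) ((f ^^ a) x) < e / 3"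
      using \<rho> m(2) by simp
    moreover have comm: "(f ^^ a) ((f ^^ m) x) = (f ^^ m) ((f ^^ a) x)"
    proof -
      have "(f ^^ a) ((f ^^ m) x) = (f ^^ (a + m)) x"
        by (simp add: funpow_add)
      also have "\<dots> = (f ^^ m) ((f ^^ a) x)"
        by (simp only: add.commute[of a m] funpow_add comp_apply)
      finally show ?thesis .
    qed
    ultimately have "dist ((f ^^ m) ((f ^^ a) x)) ((f ^^ a) x) < e / 3"
      by simp
    moreover have "dist ((f ^^ m) ((f ^^ a) x)) ((f ^^ m) x) \<le> e / 4"
      using N m(1) \<open>(f ^^ a) x \<in> V\<close> assms(5) by blast
    moreover have "dist ((f ^^ m) x) x < e / 3"
      using m(2) by simp
    ultimately show ?thesis
      using dist_triangle3[of "(f ^^ a) x" x "(f ^^ m) ((f ^^ a) x)"]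
        dist_triangle[of "(f ^^ m) ((f ^^ a) x)" x "(f ^^ m) x"] \<open>e > 0\<close> by linarith
  qed
  then have "\<not> 0 < dist ((f ^^ a) x) x"
    using less_irrefl by blast
  then have "(f ^^ a) x = x"
    by simp
  then show False
    using aperiodic a(1) unfolding periodic_point_def by blast
qed

theorem mainTheorem6:
  fixes X :: "'a::metric_space set" and f g :: "'a \<Rightarrow> 'a"
  assumes "peano_continuum X"
    and "homeomorphism X X f g"
    and "cw_expansive X f"
  shows "openin (top_of_set X) {x \<in> X. sink X f x}
     \<and> (\<forall>x \<in> {x \<in> X. sink X f x} \<inter> nonwandering X f. periodic_point f x)"
proof
  have X: "compact X" "locally connected X"
    using assms(1) unfolding peano_continuum_def by auto
  then show "openin (top_of_set X) {x \<in> X. sink X f x}"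
    using openin_sinks assms(2,3) by blast
  have f: "continuous_on X f" "f ` X \<subseteq> X"
    using assms(2) by (auto simp: homeomorphism_def)
  show "\<forall>x \<in> {x \<in> X. sink X f x} \<inter> nonwandering X f. periodic_point f x"
  proof
    fix x assume x: "x \<in> {x \<in> X. sink X f x} \<inter> nonwandering X f"
    then have "weak_sink X f x"
      by (simp add: sink_def)
    then obtain V where "openin (top_of_set X) V" "x \<in> V" "iterates_shrink f V"
      using weak_sink_has_shrinking_nbhd[OF X assms(2,3)] by blast
    then show "periodic_point f x"
      using periodic_point_if_nonwandering_shrinking[OF f] x by blast
  qed
qed

end
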